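(* For every positive integer $h$ there exists $N$ such that if $G$ is a graph with $|V(G)|\ge N$ which is neither complete nor edgeless, then $G$ contains an induced subgraph $J$ such that $|V(J)|=h$ and either $J$ or $\bar J$ is a star or has exactly one edge.
   Context: All graphs are finite and simple; $\bar J$ denotes the complement of $J$; a star is a complete bipartite graph $K_{1,m}$. *)

theory Defs
  imports Main
begin

definition simple_graph :: "'a set \<Rightarrow> ('a \<Rightarrow> 'a \<Rightarrow> bool) \<Rightarrow> bool" where
  "simple_graph V E \<longleftrightarrow> finite V \<and>
     (\<forall>x\<in>V. \<forall>y\<in>V. E x y \<longrightarrow> E y x) \<and> (\<forall>x\<in>V. \<not> E x x)"

definition complete_graph :: "'a set \<Rightarrow> ('a \<Rightarrow> 'a \<Rightarrow> bool) \<Rightarrow> bool" where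
  "complete_graph V E \<longleftrightarrow> (\<forall>x\<in>V. \<forall>y\<in>V. x \<noteq> y \<longrightarrow> E x y)"

definition edgeless_graph :: "'a set \<Rightarrow> ('a \<Rightarrow> 'a \<Rightarrow> bool) \<Rightarrow> bool" where
  "edgeless_graph V E \<longleftrightarrow> (\<forall>x\<in>V. \<forall>y\<in>V. \<not> E x y)"

definition compl_rel :: "('a \<Rightarrow> 'a \<Rightarrow> bool) \<Rightarrow> 'a \<Rightarrow> 'a \<Rightarrow> bool" where
  "compl_rel E x y \<longleftrightarrow> x \<noteq> y \<and> \<not> E x y"

definition is_star :: "'a set \<Rightarrow> ('a \<Rightarrow> 'a \<Rightarrow> bool) \<Rightarrow> bool" where
  "is_star S E \<longleftrightarrow> (\<exists>c\<in>S. \<forall>x\<in>S. \<forall>y\<in>S. x \<noteq> y \<longrightarrow> (E x y \<longleftrightarrow> x = c \<or> y = c))"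

definition edges_on :: "'a set \<Rightarrow> ('a \<Rightarrow> 'a \<Rightarrow> bool) \<Rightarrow> 'a set set" where
  "edges_on S E = {{x, y} | x y. x \<in> S \<and> y \<in> S \<and> x \<noteq> y \<and> E x y}"

definition has_exactly_one_edge :: "'a set \<Rightarrow> ('a \<Rightarrow> 'a \<Rightarrow> bool) \<Rightarrow> bool" where
  "has_exactly_one_edge S E \<longleftrightarrow> card (edges_on S E) = 1"

end

theory Submission
  imports Defs "HOL-Library.Ramsey"
begin

text \<open>By Ramsey's theorem a large graph has a large independent set \<open>I\<close> either in \<open>G\<close>
or in its complement, and the complement of a graph that is neither complete nor edgeless
is again of that kind; so assume \<open>I\<close> is independent in \<open>G\<close> and let \<open>vu\<close> be an edge.
If an endpoint \<open>v\<close> has at least \<open>h - 1\<close> neighbours in \<open>I\<close>, they span a star with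
centre \<open>v\<close>. If it has a neighbour \<open>w \<in> I\<close> but fewer than \<open>h - 1\<close>, then \<open>v\<close>, \<open>w\<close>
and \<open>h - 2\<close> non-neighbours of \<open>v\<close> in \<open>I\<close> induce exactly one edge. If neither endpoint
has a neighbour in \<open>I\<close>, then \<open>v\<close>, \<open>u\<close> and any \<open>h - 2\<close> vertices of \<open>I\<close> do.\<close>

definition independent_set :: "'a set \<Rightarrow> ('a \<Rightarrow> 'a \<Rightarrow> bool) \<Rightarrow> bool" where
  "independent_set I E \<longleftrightarrow> (\<forall>a\<in>I. \<forall>b\<in>I. \<not> E a b)"

lemma independent_set_subset: "independent_set I E \<Longrightarrow> T \<subseteq> I \<Longrightarrow> independent_set T E"
  unfolding independent_set_def by blast

lemma simple_graph_sym: "simple_graph V E \<Longrightarrow> x \<in> V \<Longrightarrow> y \<in> V \<Longrightarrow> E x y \<Longrightarrow> E y x"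
  unfolding simple_graph_def by blast

lemma simple_graph_compl_rel: "simple_graph V E \<Longrightarrow> simple_graph V (compl_rel E)"
  unfolding simple_graph_def compl_rel_def by blast

lemma edgeless_graph_compl_rel_iff: "edgeless_graph V (compl_rel E) \<longleftrightarrow> complete_graph V E"
  unfolding edgeless_graph_def complete_graph_def compl_rel_def by blast

lemma ramsey_independent_set:
  "\<exists>r. \<forall>(V::'a set) E. simple_graph V E \<and> r \<le> card V \<longrightarrow>
     (\<exists>I\<subseteq>V. card I = n \<and> (independent_set I E \<or> independent_set I (compl_rel E)))"
proof -
  obtain r where r: "\<forall>(V::'a set) (F::'a set set). finite V \<and> r \<le> card V \<longrightarrow>
      (\<exists>R\<subseteq>V. card R = n \<and> clique R F \<or> card R = n \<and> indep R F)"
    using ramsey2 by blast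
  have "\<exists>I\<subseteq>V. card I = n \<and> (independent_set I E \<or> independent_set I (compl_rel E))"
    if G: "simple_graph V E" and large: "r \<le> card V" for V :: "'a set" and E
  proof -
    define F where "F = {{x, y} | x y. E x y}"
    obtain R where R: "R \<subseteq> V" "card R = n" "clique R F \<or> indep R F"
      using r G large unfolding simple_graph_def by blast
    have "independent_set R (compl_rel E)" if "clique R F"
    proof -
      have "E a b" if "a \<in> R" "b \<in> R" "a \<noteq> b" for a b
      proof -
        have "{a, b} \<in> F" using \<open>clique R F\<close> that unfolding clique_def by blast
        then obtain x y where "{a, b} = {x, y}" "E x y" unfolding F_def by blast
        then show ?thesis
          using G R(1) that unfolding simple_graph_def doubleton_eq_iff by blast
      qed
      then show ?thesis unfolding independent_set_def compl_rel_def by blast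
    qed
    moreover have "independent_set R E" if "indep R F"
    proof -
      have "\<not> E a b" if "a \<in> R" "b \<in> R" for a b
      proof (cases "a = b")
        case True
        then show ?thesis using G R(1) that unfolding simple_graph_def by blast
      next
        case False
        then have "{a, b} \<notin> F" using \<open>indep R F\<close> that unfolding indep_def by blast
        then show ?thesis unfolding F_def by blast
      qed
      then show ?thesis unfolding independent_set_def by blast
    qed
    ultimately show ?thesis using R by blast
  qed
  then show ?thesis by blast
qed

lemma is_star_insert_centre:
  assumes G: "simple_graph V E" and S: "insert v I \<subseteq> V"
    and I: "independent_set I E" and centre: "\<forall>x\<in>I. E v x"
  shows "is_star (insert v I) E"
proof -
  have "E x y \<longleftrightarrow> x = v \<or> y = v" if "x \<in> insert v I" "y \<in> insert v I" "x \<noteq> y" for x y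
  proof (cases "x = v")
    case True
    then show ?thesis using that centre by auto
  next
    case False
    then have "x \<in> I" using that by simp
    show ?thesis
    proof (cases "y = v")
      case True
      then show ?thesis using centre \<open>x \<in> I\<close> simple_graph_sym[OF G] S by blast
    next
      case False
      then show ?thesis using I \<open>x \<in> I\<close> \<open>x \<noteq> v\<close> that unfolding independent_set_def by auto
    qed
  qed
  then show ?thesis unfolding is_star_def by blast
qed

lemma has_exactly_one_edge_insert_edge:
  assumes G: "simple_graph V E" and S: "insert v (insert u T) \<subseteq> V"
    and T: "independent_set T E" and vu: "E v u" and no_edges: "\<forall>t\<in>T. \<not> E v t \<and> \<not> E u t"
  shows "has_exactly_one_edge (insert v (insert u T)) E"
proof -
  have "v \<noteq> u" using G S vu unfolding simple_graph_def by blast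
  have "x = v \<and> y = u \<or> x = u \<and> y = v"
    if "x \<in> insert v (insert u T)" "y \<in> insert v (insert u T)" "E x y" for x y
  proof -
    have "\<not> (x \<in> T \<and> y \<in> T)" using T that(3) unfolding independent_set_def by blast
    moreover have "x \<notin> T" if "y = v \<or> y = u" using no_edges simple_graph_sym[OF G] S that \<open>E x y\<close> by blast
    moreover have "y \<notin> T" if "x = v \<or> x = u" using no_edges that \<open>E x y\<close> by blast
    moreover have "x \<noteq> y" using G S that unfolding simple_graph_def by blast
    ultimately show ?thesis using that(1,2) by blast
  qed
  then have "edges_on (insert v (insert u T)) E = {{v, u}}"
    using vu \<open>v \<noteq> u\<close> unfolding edges_on_def by fast
  then show ?thesis unfolding has_exactly_one_edge_def by simp
qed

lemma star_or_one_edge_at_neighbour: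
  assumes G: "simple_graph V E" and I: "I \<subseteq> V" "independent_set I E" "2 * (h - 2) \<le> card I"
    and h: "0 < h" and v: "v \<in> V" and w: "w \<in> I" "E v w"
  shows "\<exists>S\<subseteq>V. card S = h \<and> (is_star S E \<or> has_exactly_one_edge S E)"
proof -
  define Nb where "Nb = {x\<in>I. E v x}"
  have fin: "finite I" using G I(1) finite_subset unfolding simple_graph_def by blast
  have "v \<notin> I" using I(2) w unfolding independent_set_def by blast
  show ?thesis
  proof (cases "h - 1 \<le> card Nb")
    case True
    then obtain T where T: "T \<subseteq> Nb" "card T = h - 1" "finite T"
      by (rule obtain_subset_with_card_n)
    have "T \<subseteq> I" using T(1) unfolding Nb_def by blast
    then have "v \<notin> T" using \<open>v \<notin> I\<close> by blast
    then have "card (insert v T) = h" using T(2,3) h by simp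
    moreover have "insert v T \<subseteq> V" using \<open>T \<subseteq> I\<close> I(1) v by blast
    moreover have "is_star (insert v T) E"
      using is_star_insert_centre[OF G \<open>insert v T \<subseteq> V\<close> independent_set_subset[OF I(2) \<open>T \<subseteq> I\<close>]]
        T(1) unfolding Nb_def by blast
    ultimately show ?thesis by blast
  next
    case False
    have "card Nb \<le> h - 2" using False by linarith
    then have "h - 2 \<le> card (I - Nb)"
      using I(3) fin by (simp add: Nb_def card_Diff_subset)
    then obtain T where T: "T \<subseteq> I - Nb" "card T = h - 2" "finite T"
      by (rule obtain_subset_with_card_n)
    have "T \<subseteq> I" using T(1) by blast
    have "v \<notin> T" "w \<notin> T" "v \<noteq> w" using T(1) w \<open>v \<notin> I\<close> unfolding Nb_def by auto
    then have "card (insert v (insert w T)) = h"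
      using T(2,3) False by simp
    moreover have "insert v (insert w T) \<subseteq> V" using \<open>T \<subseteq> I\<close> I(1) v w(1) by blast
    moreover have "\<forall>t\<in>T. \<not> E v t \<and> \<not> E w t"
      using T(1) w(1) I(2) unfolding Nb_def independent_set_def by blast
    ultimately show ?thesis
      using has_exactly_one_edge_insert_edge[OF G _ independent_set_subset[OF I(2) \<open>T \<subseteq> I\<close>] w(2)]
      by blast
  qed
qed

lemma induced_star_or_one_edge:
  assumes G: "simple_graph V E" and I: "I \<subseteq> V" "independent_set I E" "2 * (h - 2) \<le> card I"
    and h: "0 < h" and edge: "\<not> edgeless_graph V E"
  shows "\<exists>S\<subseteq>V. card S = h \<and> (is_star S E \<or> has_exactly_one_edge S E)"
proof -
  obtain v u where vu: "v \<in> V" "u \<in> V" "E v u"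
    using edge unfolding edgeless_graph_def by blast
  have uv: "E u v" using simple_graph_sym[OF G vu] .
  have "h = 1 \<or> 2 \<le> h" using h by linarith
  then consider (v_sees_I) "\<exists>w\<in>I. E v w" | (u_sees_I) "\<exists>w\<in>I. E u w" | (h_1) "h = 1"
    | (blind) "\<forall>w\<in>I. \<not> E v w \<and> \<not> E u w" "2 \<le> h"
    by blast
  then show ?thesis
  proof cases
    case v_sees_I
    then show ?thesis using star_or_one_edge_at_neighbour[OF G I h vu(1)] by blast
  next
    case u_sees_I
    then show ?thesis using star_or_one_edge_at_neighbour[OF G I h vu(2)] by blast
  next
    case h_1
    have "is_star {v} E" unfolding is_star_def by blast
    then show ?thesis using vu(1) h_1 by (intro exI[of _ "{v}"]) simp
  next
    case blind
    have "h - 2 \<le> card I" using I(3) by linarith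
    then obtain T where T: "T \<subseteq> I" "card T = h - 2" "finite T"
      by (rule obtain_subset_with_card_n)
    have "v \<notin> T" "u \<notin> T" using T(1) blind(1) vu(3) uv by auto
    moreover have "v \<noteq> u" using G vu unfolding simple_graph_def by blast
    ultimately have "card (insert v (insert u T)) = h" using T(2,3) blind(2) by simp
    moreover have "insert v (insert u T) \<subseteq> V" using T(1) I(1) vu by blast
    moreover have "\<forall>t\<in>T. \<not> E v t \<and> \<not> E u t" using T(1) blind(1) by blast
    ultimately show ?thesis
      using has_exactly_one_edge_insert_edge[OF G _ independent_set_subset[OF I(2) T(1)] vu(3)]
      by blast
  qed
qed

theorem lemma3p8:
  fixes h :: nat
  assumes "h > 0"
  shows "\<exists>N::nat. \<forall>(V::'a set) (E::'a \<Rightarrow> 'a \<Rightarrow> bool).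
           simple_graph V E \<and> card V \<ge> N \<and> \<not> complete_graph V E \<and> \<not> edgeless_graph V E \<longrightarrow>
           (\<exists>S\<subseteq>V. card S = h \<and>
              (is_star S E \<or> has_exactly_one_edge S E \<or>
               is_star S (compl_rel E) \<or> has_exactly_one_edge S (compl_rel E)))"
proof -
  obtain r where r: "\<forall>(V::'a set) E. simple_graph V E \<and> r \<le> card V \<longrightarrow>
      (\<exists>I\<subseteq>V. card I = 2 * (h - 2) \<and> (independent_set I E \<or> independent_set I (compl_rel E)))"
    using ramsey_independent_set by blast
  have "\<exists>S\<subseteq>V. card S = h \<and>
          (is_star S E \<or> has_exactly_one_edge S E \<or>
           is_star S (compl_rel E) \<or> has_exactly_one_edge S (compl_rel E))"
    if G: "simple_graph V E" "r \<le> card V" "\<not> complete_graph V E" "\<not> edgeless_graph V E"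
    for V :: "'a set" and E
  proof -
    obtain I where I: "I \<subseteq> V" "card I = 2 * (h - 2)"
      and indep: "independent_set I E \<or> independent_set I (compl_rel E)"
      using r G(1,2) by blast
    have large: "2 * (h - 2) \<le> card I" using I(2) by simp
    have "\<not> edgeless_graph V (compl_rel E)"
      using G(3) by (simp add: edgeless_graph_compl_rel_iff)
    with indep show ?thesis
      using induced_star_or_one_edge[OF G(1) I(1) _ large assms G(4)]
        induced_star_or_one_edge[OF simple_graph_compl_rel[OF G(1)] I(1) _ large assms]
      by blast
  qed
  then show ?thesis by blast
qed

end
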